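(* Let $b\ge2$ and $k\in\mathbb{N}$, and let $f\in\mathcal{M}^b$ be a multiset whose maximal element is at most $k$ and which is not the constant $0$ function. Then $d(f)\le d([k]_b)$, and the inequality is strict if $f\neq[k]_b$. Equivalently, in any base $b\ge3$, among all $k$-digit numbers $n$ (in base $b$), the number $d_b(n)$ of lunar divisors has a unique maximum at $n=(b^k-1)/(b-1)$, whose base-$b$ expansion is $11\ldots1$.
   Context: $\mathbb{N}=\{0,1,2,\ldots\}$, $[k]=\{0,1,\ldots,k\}$. For $b\ge1$, $\mathcal{M}^b$ is the set of finite multisets of natural numbers with multiplicities at most $b$, i.e. functions $f:\mathbb{N}\to\{0,1,\ldots,b\}$ with $f(j)=0$ for all large $j$. The set-array representation of $f$ is $(A_1,\ldots,A_b)$ where $A_i=\{a\in\mathbb{N}: f(a)\ge i\}$ (so $A_1\supseteq A_2\supseteq\cdots\supseteq A_b$). The sum of multisets is defined coordinatewise on set arrays: $(A_1,\ldots,A_b)+(B_1,\ldots,B_b)=(A_1+B_1,\ldots,A_b+B_b)$, where $S+T=\{s+t:s\in S,t\in T\}$ and $S+\emptyset=\emptyset$. A multiset $g\in\mathcal{M}^b$ is a divisor of $f$ if $f=g+h$ for some $h\in\mathcal{M}^b$; for $f$ not identically $0$, $d(f)$ is the number of divisors of $f$. $[k]_b\in\mathcal{M}^b$ is the multiset with set-array representation $([k],\emptyset,\ldots,\emptyset)$. Base-$b$ lunar product: for $x=\sum_ix_ib^i$, $y=\sum_jy_jb^j$ with digits in $\{0,\ldots,b-1\}$, $x\otimes y=\sum_n(\max_{i+j=n}\min(x_i,y_j))b^n$;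 $d_b(n)$ is the number of positive integers $m$ with $m\otimes q=n$ for some integer $q$. *)

theory Defs
  imports Main
begin

text \<open>Multisets of naturals with multiplicities at most b, as functions nat => nat
  with finite support.\<close>
definition Mb :: "nat \<Rightarrow> (nat \<Rightarrow> nat) set" where
  "Mb b = {f. (\<forall>j. f j \<le> b) \<and> finite {j. f j \<noteq> 0}}"

text \<open>Set-array representation: component i (for 1 <= i <= b) is A_i.\<close>
definition set_array :: "(nat \<Rightarrow> nat) \<Rightarrow> nat \<Rightarrow> nat set" where
  "set_array f i = {a. f a \<ge> i}"

definition sumset :: "nat set \<Rightarrow> nat set \<Rightarrow> nat set" where
  "sumset S T = {s + t | s t. s \<in> S \<and> t \<in> T}"

definition ms_divisor :: "nat \<Rightarrow> (nat \<Rightarrow> nat) \<Rightarrow> (nat \<Rightarrow> nat) \<Rightarrow> bool" where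
  "ms_divisor b g f \<longleftrightarrow> g \<in> Mb b \<and> (\<exists>h \<in> Mb b. \<forall>i \<in> {1..b}.
      set_array f i = sumset (set_array g i) (set_array h i))"

definition ms_d :: "nat \<Rightarrow> (nat \<Rightarrow> nat) \<Rightarrow> nat" where
  "ms_d b f = card {g. ms_divisor b g f}"

definition interval_ms :: "nat \<Rightarrow> nat \<Rightarrow> nat" where
  "interval_ms k = (\<lambda>j. if j \<le> k then 1 else 0)"

definition digit :: "nat \<Rightarrow> nat \<Rightarrow> nat \<Rightarrow> nat" where
  "digit b x i = x div b ^ i mod b"

text \<open>Digits at positions n > x + y of the product are 0, so summing up to x + y suffices.\<close>
definition lunar_mult :: "nat \<Rightarrow> nat \<Rightarrow> nat \<Rightarrow> nat" where
  "lunar_mult b x y = (\<Sum>n\<le>x + y.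
      Max ((\<lambda>i. min (digit b x i) (digit b y (n - i))) ` {..n}) * b ^ n)"

definition lunar_d :: "nat \<Rightarrow> nat \<Rightarrow> nat" where
  "lunar_d b n = card {m. m > 0 \<and> (\<exists>q. lunar_mult b m q = n)}"

end

theory Submission
  imports Defs
begin

text \<open>
  Let F be the support of f. A divisor g of f, with cofactor h, has a support S with S + T = F,
  T the support of h. Shift g down by a = min S and keep its values at the points x up to
  max S - a for which x + min F lies in F; put 1 at the remaining such points (g vanishes there)
  and append a block of min F entries 1, except for a 2 at position max S when a > 0, which
  records a.
  Adding the interval [0, k - max S + a - min F] to the support of the result gives [0, k]:
  a zero is only placed at x when x + min F is in F, i.e. within the width of T above a point of
  the shifted S. So the result is a divisor of [k]_b. It determines g: its support gives
  max S - a, the 2 gives a, and the values below give g. If f differs from [k]_b, then one of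
  [k]_b, [0]_b and the constant 2 on [0, k] is not reached.

  The lunar statement is the case of multiplicity bound b - 1: the digits of a lunar product
  form the sum of the digit multisets of the factors, so the lunar divisors of n correspond to
  the divisors of its digit multiset, and the digit multiset of 11...1 is an interval.
\<close>

section \<open>Sumsets and multiset divisors\<close>

lemma sumset_image: "sumset S T = (\<lambda>(s, t). s + t) ` (S \<times> T)"
  unfolding sumset_def by auto

lemma finite_sumset: "finite S \<Longrightarrow> finite T \<Longrightarrow> finite (sumset S T)"
  by (simp add: sumset_image)

lemma sumset_empty_iff: "sumset S T = {} \<longleftrightarrow> S = {} \<or> T = {}"
  unfolding sumset_def by auto

lemma Min_sumset:
  assumes "finite S" "S \<noteq> {}" "finite T" "T \<noteq> {}"
  shows "Min (sumset S T) = Min S + Min T"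
proof (rule Min_eqI)
  show "finite (sumset S T)" using assms by (simp add: finite_sumset)
  show "Min S + Min T \<le> y" if "y \<in> sumset S T" for y
    using assms that unfolding sumset_def by (auto intro!: add_mono)
  show "Min S + Min T \<in> sumset S T"
    using assms Min_in[of S] Min_in[of T] unfolding sumset_def by blast
qed

lemma Max_sumset:
  assumes "finite S" "S \<noteq> {}" "finite T" "T \<noteq> {}"
  shows "Max (sumset S T) = Max S + Max T"
proof (rule Max_eqI)
  show "finite (sumset S T)" using assms by (simp add: finite_sumset)
  show "y \<le> Max S + Max T" if "y \<in> sumset S T" for y
    using assms that unfolding sumset_def by (auto intro!: add_mono)
  show "Max S + Max T \<in> sumset S T"
    using assms Max_in[of S] Max_in[of T] unfolding sumset_def by blast
qed

lemma sumset_atMost: "sumset {..p} {..q} = {..p + q}"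
proof (intro equalityI subsetI)
  fix z assume "z \<in> {..p + q}"
  then have "min z p \<in> {..p} \<and> z - min z p \<in> {..q} \<and> z = min z p + (z - min z p)"
    by auto
  then show "z \<in> sumset {..p} {..q}"
    unfolding sumset_def by blast
qed (auto simp: sumset_def)

lemma set_array_1: "set_array f 1 = {x. f x \<noteq> 0}"
  by (auto simp: set_array_def)

lemma finite_support_Mb: "f \<in> Mb b \<Longrightarrow> finite {x. f x \<noteq> 0}"
  by (simp add: Mb_def)

lemma set_array_inj:
  assumes "\<forall>x. f x \<le> b" "\<forall>x. g x \<le> b" "\<forall>i\<in>{1..b}. set_array f i = set_array g i"
  shows "f = g"
proof (rule ext, rule ccontr)
  fix x assume ne: "f x \<noteq> g x"
  define i where "i = max (f x) (g x)"
  have "i \<in> {1..b}"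
    using ne assms(1,2) by (auto simp: i_def max_def)
  moreover have "x \<in> set_array f i \<longleftrightarrow> x \<notin> set_array g i"
    using ne by (auto simp: set_array_def i_def max_def)
  ultimately show False
    using assms(3) by blast
qed

lemma interval_ms_Mb: "1 \<le> b \<Longrightarrow> interval_ms k \<in> Mb b"
  by (auto simp: Mb_def interval_ms_def)

lemma interval_ms_nonzero: "interval_ms k \<noteq> (\<lambda>_. 0)"
proof
  assume "interval_ms k = (\<lambda>_. 0)"
  then have "interval_ms k 0 = 0"
    by simp
  then show False
    by (simp add: interval_ms_def)
qed

lemma support_interval_ms: "{x. interval_ms k x \<noteq> 0} = {..k}"
  by (auto simp: interval_ms_def)

lemma ms_divisor_set_array_nonempty:
  assumes "ms_divisor b g f" "i \<in> {1..b}" "set_array f i \<noteq> {}"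
  shows "set_array g i \<noteq> {}"
proof -
  obtain h where "set_array f i = sumset (set_array g i) (set_array h i)"
    using assms(1,2) unfolding ms_divisor_def by blast
  then show ?thesis
    using assms(3) by (auto simp: sumset_empty_iff)
qed

text \<open>The higher levels of [k]_b and [n]_b are empty, so only the supports matter.\<close>

lemma ms_divisor_intervalI:
  assumes w: "w \<in> Mb b" and cover: "sumset {x. w x \<noteq> 0} {..n} = {..k}"
  shows "ms_divisor b w (interval_ms k)"
  unfolding ms_divisor_def
proof (intro conjI bexI ballI)
  have "{x. w x \<noteq> 0} \<noteq> {}"
    using cover sumset_empty_iff[of "{x. w x \<noteq> 0}" "{..n}"] by auto
  then obtain x where "w x \<noteq> 0"
    by blast
  then show "interval_ms n \<in> Mb b"
    using w le_trans[of 1 "w x" b] by (intro interval_ms_Mb) (auto simp: Mb_def)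
  fix i assume "i \<in> {1..b}"
  then consider "i = 1" | "2 \<le> i" by fastforce
  then show "set_array (interval_ms k) i = sumset (set_array w i) (set_array (interval_ms n) i)"
  proof cases
    case 1
    then show ?thesis
      using cover by (simp only: set_array_1 support_interval_ms)
  next
    case 2
    then have "set_array (interval_ms j) i = {}" for j
      by (auto simp: set_array_def interval_ms_def)
    then show ?thesis
      by (simp add: sumset_def)
  qed
qed fact

section \<open>Embedding the divisors of f into those of [k]_b\<close>

definition ms_min :: "(nat \<Rightarrow> nat) \<Rightarrow> nat" where
  "ms_min g = Min {x. g x \<noteq> 0}"

definition ms_max :: "(nat \<Rightarrow> nat) \<Rightarrow> nat" where
  "ms_max g = Max {x. g x \<noteq> 0}"

text \<open>The level-1 part of a factorisation f = g + h, with F and T the supports of f and h.\<close>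

locale support_factor =
  fixes F T :: "nat set" and g :: "nat \<Rightarrow> nat"
  assumes finite_support: "finite {x. g x \<noteq> 0}" and finite_T: "finite T"
    and F_eq: "F = sumset {x. g x \<noteq> 0} T" and F_nonempty: "F \<noteq> {}"
begin

lemma support_nonempty: "{x. g x \<noteq> 0} \<noteq> {}" and T_nonempty: "T \<noteq> {}"
  using F_eq F_nonempty sumset_empty_iff by auto

lemma Min_F: "Min F = ms_min g + Min T"
  unfolding F_eq ms_min_def
  by (rule Min_sumset[OF finite_support support_nonempty finite_T T_nonempty])

lemma Max_F: "Max F = ms_max g + Max T"
  unfolding F_eq ms_max_def
  by (rule Max_sumset[OF finite_support support_nonempty finite_T T_nonempty])

lemma support_bounds: "g x \<noteq> 0 \<Longrightarrow> ms_min g \<le> x \<and> x \<le> ms_max g"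
  using finite_support by (auto simp: ms_min_def ms_max_def)

lemma ms_max_nonzero: "g (ms_max g) \<noteq> 0"
  using Max_in[OF finite_support support_nonempty] by (simp add: ms_max_def)

lemma ms_min_le_ms_max: "ms_min g \<le> ms_max g"
  using support_bounds ms_max_nonzero by blast

lemma ms_min_le_Min_F: "ms_min g \<le> Min F"
  by (simp add: Min_F)

lemma Min_T_le_Max_T: "Min T \<le> Max T"
  using finite_T T_nonempty by simp

lemma span_le_Max_F: "ms_max g - ms_min g + Min F \<le> Max F"
  using Min_F Max_F ms_min_le_ms_max Min_T_le_Max_T by linarith

lemma le_Max_F: "g x \<noteq> 0 \<Longrightarrow> x \<le> Max F"
  using support_bounds Max_F by fastforce

lemma shift_in_F:
  assumes "g (x + ms_min g) \<noteq> 0"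
  shows "x + Min F \<in> F"
proof -
  have "x + ms_min g + Min T \<in> F"
    using assms Min_in[OF finite_T T_nonempty] unfolding F_eq sumset_def by blast
  then show ?thesis
    by (simp add: Min_F add.assoc)
qed

lemma shift_in_F_cases:
  assumes "x + Min F \<in> F"
  obtains y where "y \<le> x" "g (y + ms_min g) \<noteq> 0"
    "x - y + (ms_max g - ms_min g) + Min F \<le> Max F"
proof -
  obtain p q where pq: "g p \<noteq> 0" "q \<in> T" "x + Min F = p + q"
    using assms unfolding F_eq sumset_def by auto
  have "Min T \<le> q" "q \<le> Max T"
    using pq(2) finite_T by auto
  moreover have "ms_min g \<le> p" "p \<le> ms_max g"
    using support_bounds[OF pq(1)] by auto
  ultimately show ?thesis
    using pq Min_F Max_F by (intro that[of "p - ms_min g"]) auto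
qed

end

lemma ms_divisor_support_factorE:
  assumes "ms_divisor b g f" "1 \<le> b" "f \<noteq> (\<lambda>_. 0)"
  obtains T where "support_factor {x. f x \<noteq> 0} T g"
proof -
  obtain h where h: "h \<in> Mb b" "set_array f 1 = sumset (set_array g 1) (set_array h 1)"
    using assms(1,2) unfolding ms_divisor_def by auto
  show ?thesis
  proof (rule that, unfold_locales)
    have "g \<in> Mb b"
      using assms(1) by (simp add: ms_divisor_def)
    then show "finite {x. g x \<noteq> 0}" "finite {x. h x \<noteq> 0}"
      using h(1) by (simp_all only: finite_support_Mb)
    show "{x. f x \<noteq> 0} = sumset {x. g x \<noteq> 0} {x. h x \<noteq> 0}"
      using h(2) by (simp only: set_array_1)
    show "{x. f x \<noteq> 0} \<noteq> {}"
      using assms(3) by auto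
  qed
qed

lemma finite_ms_divisors:
  assumes "1 \<le> b" "f \<noteq> (\<lambda>_. 0)"
  shows "finite {g. ms_divisor b g f}"
proof (rule finite_subset)
  define K where "K = Max {x. f x \<noteq> 0}"
  show "finite {g. \<forall>x. (x \<in> {..K} \<longrightarrow> g x \<in> {..b}) \<and> (x \<notin> {..K} \<longrightarrow> g x = (0::nat))}"
    by (rule finite_set_of_finite_funs) auto
  have "g x \<le> b \<and> (\<not> x \<le> K \<longrightarrow> g x = 0)" if g: "ms_divisor b g f" for g x
  proof -
    obtain T where "support_factor {x. f x \<noteq> 0} T g"
      using ms_divisor_support_factorE[OF g assms] .
    then show ?thesis
      using g support_factor.le_Max_F unfolding K_def ms_divisor_def Mb_def by fastforce
  qed
  then show "{g. ms_divisor b g f} \<subseteq> {g. \<forall>x. (x \<in> {..K} \<longrightarrow> g x \<in> {..b}) \<and> (x \<notin> {..K} \<longrightarrow> g x = 0)}"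
    by auto
qed

definition divisor_embedding :: "nat set \<Rightarrow> (nat \<Rightarrow> nat) \<Rightarrow> nat \<Rightarrow> nat" where
  "divisor_embedding F g x =
    (if x \<le> ms_max g - ms_min g then (if x + Min F \<in> F then g (x + ms_min g) else 1)
     else if x \<le> ms_max g - ms_min g + Min F then (if x = ms_max g then 2 else 1)
     else 0)"

context support_factor
begin

lemma embedding_le:
  assumes "\<forall>x. g x \<le> b" "2 \<le> b"
  shows "divisor_embedding F g x \<le> b"
  using assms by (simp add: divisor_embedding_def)

lemma embedding_support_subset:
  "{x. divisor_embedding F g x \<noteq> 0} \<subseteq> {..ms_max g - ms_min g + Min F}"
  by (auto simp: divisor_embedding_def)

lemma embedding_top: "divisor_embedding F g (ms_max g - ms_min g + Min F) \<noteq> 0"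
proof (cases "Min F = 0")
  case True
  then have "ms_min g = 0"
    using ms_min_le_Min_F by simp
  then show ?thesis
    using True shift_in_F[of "ms_max g"] ms_max_nonzero by (simp add: divisor_embedding_def)
qed (simp add: divisor_embedding_def)

lemma Max_embedding_support:
  "Max {x. divisor_embedding F g x \<noteq> 0} = ms_max g - ms_min g + Min F"
  using embedding_support_subset embedding_top finite_subset[OF embedding_support_subset]
  by (intro Max_eqI) auto

lemma embedding_twos:
  "{x. ms_max g - ms_min g < x \<and> divisor_embedding F g x = 2} =
    (if 0 < ms_min g then {ms_max g} else {})"
  using ms_min_le_ms_max ms_min_le_Min_F by (auto simp: divisor_embedding_def)

lemma recover_from_embedding:
  "g y = (if ms_min g \<le> y \<and> y \<le> ms_max g \<and> y - ms_min g + Min F \<in> F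
          then divisor_embedding F g (y - ms_min g) else 0)"
proof (cases "ms_min g \<le> y \<and> y \<le> ms_max g")
  case True
  then have "g y \<noteq> 0 \<Longrightarrow> y - ms_min g + Min F \<in> F"
    using shift_in_F[of "y - ms_min g"] by simp
  then show ?thesis
    using True by (auto simp: divisor_embedding_def)
qed (use support_bounds[of y] in auto)

lemma sumset_embedding_support:
  assumes "Max F \<le> k"
  shows "sumset {x. divisor_embedding F g x \<noteq> 0} {..k - (ms_max g - ms_min g + Min F)} = {..k}"
  (is "sumset ?E {..k - ?top} = _")
proof (intro equalityI subsetI)
  fix z assume "z \<in> sumset ?E {..k - ?top}"
  then show "z \<in> {..k}"
    using embedding_support_subset span_le_Max_F assms unfolding sumset_def by fastforce
next
  fix z assume z: "z \<in> {..k}"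
  have "\<exists>y\<le>z. y \<in> ?E \<and> z - y \<le> k - ?top"
  proof (cases "z \<in> ?E \<or> ?top \<le> z")
    case True
    then show ?thesis
      using embedding_top z by auto
  next
    case False
    then have "z \<le> ms_max g - ms_min g" "z + Min F \<in> F" "g (z + ms_min g) = 0"
      by (auto simp: divisor_embedding_def split: if_splits)
    then obtain y where "y \<le> z" "g (y + ms_min g) \<noteq> 0"
      "z - y + (ms_max g - ms_min g) + Min F \<le> Max F"
      using shift_in_F_cases by blast
    moreover have "y + Min F \<in> F"
      using shift_in_F \<open>g (y + ms_min g) \<noteq> 0\<close> .
    ultimately show ?thesis
      using assms \<open>z \<le> ms_max g - ms_min g\<close>
      by (intro exI[of _ y]) (auto simp: divisor_embedding_def)
  qed
  then show "z \<in> sumset ?E {..k - ?top}"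
    unfolding sumset_def by force
qed

end

lemma divisor_embedding_inj:
  assumes "support_factor F T1 g1" "support_factor F T2 g2"
    and eq: "divisor_embedding F g1 = divisor_embedding F g2"
  shows "g1 = g2"
proof -
  interpret g1: support_factor F T1 g1 by fact
  interpret g2: support_factor F T2 g2 by fact
  have span: "ms_max g1 - ms_min g1 = ms_max g2 - ms_min g2"
    using g1.Max_embedding_support g2.Max_embedding_support eq by simp
  have "(if 0 < ms_min g1 then {ms_max g1} else {}) = (if 0 < ms_min g2 then {ms_max g2} else {})"
    using g1.embedding_twos g2.embedding_twos span eq by simp
  then have "ms_min g1 = ms_min g2"
    using span g1.ms_min_le_ms_max g2.ms_min_le_ms_max by (auto split: if_splits)
  moreover have "ms_max g1 = ms_max g2"
    using calculation span g1.ms_min_le_ms_max g2.ms_min_le_ms_max by linarith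
  ultimately show ?thesis
    using g1.recover_from_embedding g2.recover_from_embedding eq by (intro ext) metis
qed

context
  fixes b k :: nat and f :: "nat \<Rightarrow> nat"
  assumes b: "2 \<le> b" and f_Mb: "f \<in> Mb b" and support_le: "\<forall>j. f j \<noteq> 0 \<longrightarrow> j \<le> k"
    and f_nonzero: "f \<noteq> (\<lambda>_. 0)"
begin

private lemma Max_support_le: "Max {x. f x \<noteq> 0} \<le> k"
  using f_nonzero finite_support_Mb[OF f_Mb] support_le by (subst Max_le_iff) auto

private lemma divisor_support_factorE:
  assumes "ms_divisor b g f"
  obtains T where "support_factor {x. f x \<noteq> 0} T g"
proof -
  have "1 \<le> b"
    using b by simp
  then show ?thesis
    using ms_divisor_support_factorE[OF assms _ f_nonzero] that by blast
qed

lemma embedding_ms_divisor_interval: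
  assumes "ms_divisor b g f"
  shows "ms_divisor b (divisor_embedding {x. f x \<noteq> 0} g) (interval_ms k)"
proof -
  obtain T where "support_factor {x. f x \<noteq> 0} T g"
    using divisor_support_factorE[OF assms] .
  then interpret support_factor "{x. f x \<noteq> 0}" T g .
  have "\<forall>x. g x \<le> b"
    using assms by (simp add: ms_divisor_def Mb_def)
  then have "divisor_embedding {x. f x \<noteq> 0} g \<in> Mb b"
    using embedding_le b finite_subset[OF embedding_support_subset] by (simp add: Mb_def)
  then show ?thesis
    using ms_divisor_intervalI sumset_embedding_support[OF Max_support_le] by blast
qed

lemma inj_on_embedding: "inj_on (divisor_embedding {x. f x \<noteq> 0}) {g. ms_divisor b g f}"
proof (rule inj_onI)
  fix g1 g2
  assume "g1 \<in> {g. ms_divisor b g f}" "g2 \<in> {g. ms_divisor b g f}"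
    and eq: "divisor_embedding {x. f x \<noteq> 0} g1 = divisor_embedding {x. f x \<noteq> 0} g2"
  then obtain T1 T2 where "support_factor {x. f x \<noteq> 0} T1 g1" "support_factor {x. f x \<noteq> 0} T2 g2"
    using divisor_support_factorE by (metis mem_Collect_eq)
  then show "g1 = g2"
    using divisor_embedding_inj eq by blast
qed

lemma interval_not_embedding:
  assumes "{x. f x \<noteq> 0} = {..k}" "f \<noteq> interval_ms k"
  shows "interval_ms k \<notin> divisor_embedding {x. f x \<noteq> 0} ` {g. ms_divisor b g f}"
proof
  assume "interval_ms k \<in> divisor_embedding {x. f x \<noteq> 0} ` {g. ms_divisor b g f}"
  then obtain g where g: "ms_divisor b g f" and emb: "interval_ms k = divisor_embedding {x. f x \<noteq> 0} g"
    by (rule imageE) simp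
  obtain T where "support_factor {x. f x \<noteq> 0} T g"
    using divisor_support_factorE[OF g] .
  then interpret support_factor "{x. f x \<noteq> 0}" T g .
  have "f y = interval_ms k y" if "f y \<le> 1" for y
  proof -
    have "f y \<noteq> 0 \<longleftrightarrow> y \<le> k"
      using assms(1) by blast
    then show ?thesis
      using that by (auto simp: interval_ms_def)
  qed
  then have "\<not> (\<forall>y. f y \<le> 1)"
    using assms(2) by (auto simp: fun_eq_iff)
  then obtain y0 where "2 \<le> f y0"
    by (metis not_le Suc_1 Suc_le_eq)
  then have "set_array g 2 \<noteq> {}"
    using ms_divisor_set_array_nonempty[OF g, of 2] b by (auto simp: set_array_def)
  then obtain y where y: "2 \<le> g y"
    by (auto simp: set_array_def)
  have "Min {x. f x \<noteq> 0} = 0"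
    using assms(1) by (simp add: Min_eqI)
  then have "ms_min g = 0"
    using ms_min_le_Min_F by simp
  then have "divisor_embedding {x. f x \<noteq> 0} g y = g y"
    using recover_from_embedding[of y] y by (auto split: if_splits)
  then show False
    using emb[symmetric] y by (simp add: interval_ms_def split: if_splits)
qed

lemma singleton_not_embedding:
  assumes "0 < Min {x. f x \<noteq> 0}"
  shows "interval_ms 0 \<notin> divisor_embedding {x. f x \<noteq> 0} ` {g. ms_divisor b g f}"
proof
  assume "interval_ms 0 \<in> divisor_embedding {x. f x \<noteq> 0} ` {g. ms_divisor b g f}"
  then obtain g where g: "ms_divisor b g f" and emb: "interval_ms 0 = divisor_embedding {x. f x \<noteq> 0} g"
    by (rule imageE) simp
  obtain T where "support_factor {x. f x \<noteq> 0} T g"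
    using divisor_support_factorE[OF g] .
  then interpret support_factor "{x. f x \<noteq> 0}" T g .
  show False
    using embedding_top assms emb[symmetric] by (auto simp: interval_ms_def)
qed

lemma twos_not_embedding:
  assumes "Min {x. f x \<noteq> 0} = 0" "{x. f x \<noteq> 0} \<noteq> {..k}"
  shows "(\<lambda>x. if x \<le> k then 2 else 0) \<notin> divisor_embedding {x. f x \<noteq> 0} ` {g. ms_divisor b g f}"
proof
  assume "(\<lambda>x. if x \<le> k then 2 else 0) \<in> divisor_embedding {x. f x \<noteq> 0} ` {g. ms_divisor b g f}"
  then obtain g where g: "ms_divisor b g f"
    and emb: "(\<lambda>x. if x \<le> k then 2 else 0) = divisor_embedding {x. f x \<noteq> 0} g"
    by (rule imageE) simp
  obtain T where "support_factor {x. f x \<noteq> 0} T g"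
    using divisor_support_factorE[OF g] .
  then interpret support_factor "{x. f x \<noteq> 0}" T g .
  have "{x. divisor_embedding {x. f x \<noteq> 0} g x \<noteq> 0} = {..k}"
    using emb[symmetric] by auto
  moreover have "Max {..k} = k"
    by (rule Max_eqI) auto
  ultimately have "ms_max g - ms_min g = k"
    using Max_embedding_support assms(1) by simp
  moreover obtain x where "x \<le> k" "f x = 0"
    using assms(2) support_le by auto
  ultimately have "divisor_embedding {x. f x \<noteq> 0} g x = 1"
    using assms(1) by (simp add: divisor_embedding_def)
  then show False
    using emb[symmetric] \<open>x \<le> k\<close> by simp
qed

lemma exists_divisor_interval_not_embedding:
  assumes "f \<noteq> interval_ms k"
  obtains w where "ms_divisor b w (interval_ms k)"
    "w \<notin> divisor_embedding {x. f x \<noteq> 0} ` {g. ms_divisor b g f}"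
proof -
  have b1: "1 \<le> b"
    using b by simp
  consider "{x. f x \<noteq> 0} = {..k}" | "0 < Min {x. f x \<noteq> 0}"
    | "Min {x. f x \<noteq> 0} = 0" "{x. f x \<noteq> 0} \<noteq> {..k}"
    by (metis neq0_conv)
  then show ?thesis
  proof cases
    case 1
    have "ms_divisor b (interval_ms k) (interval_ms k)"
      using ms_divisor_intervalI[OF interval_ms_Mb[OF b1], of k 0 k] sumset_atMost[of k 0]
      unfolding support_interval_ms by simp
    then show ?thesis
      using interval_not_embedding[OF 1 assms] by (rule that)
  next
    case 2
    have "ms_divisor b (interval_ms 0) (interval_ms k)"
      using ms_divisor_intervalI[OF interval_ms_Mb[OF b1], of 0 k k] sumset_atMost[of 0 k]
      unfolding support_interval_ms by simp
    then show ?thesis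
      using singleton_not_embedding[OF 2] by (rule that)
  next
    case 3
    have "{x. (if x \<le> k then 2 else 0) \<noteq> (0::nat)} = {..k}"
      by auto
    then have "ms_divisor b (\<lambda>x. if x \<le> k then 2 else 0) (interval_ms k)"
      using ms_divisor_intervalI[of "\<lambda>x. if x \<le> k then 2 else 0" b 0 k] sumset_atMost[of k 0] b
      by (simp add: Mb_def)
    then show ?thesis
      using twos_not_embedding[OF 3] by (rule that)
  qed
qed

lemma embedding_image_subset:
  "divisor_embedding {x. f x \<noteq> 0} ` {g. ms_divisor b g f} \<subseteq> {g. ms_divisor b g (interval_ms k)}"
  using embedding_ms_divisor_interval by auto

lemma finite_divisors_interval: "finite {g. ms_divisor b g (interval_ms k)}"
  using finite_ms_divisors[OF _ interval_ms_nonzero] b by simp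

theorem ms_d_le_interval: "ms_d b f \<le> ms_d b (interval_ms k)"
  unfolding ms_d_def
  by (rule card_inj_on_le[OF inj_on_embedding embedding_image_subset finite_divisors_interval])

theorem ms_d_less_interval:
  assumes "f \<noteq> interval_ms k"
  shows "ms_d b f < ms_d b (interval_ms k)"
proof -
  obtain w where "ms_divisor b w (interval_ms k)"
    "w \<notin> divisor_embedding {x. f x \<noteq> 0} ` {g. ms_divisor b g f}"
    using exists_divisor_interval_not_embedding[OF assms] .
  then have "divisor_embedding {x. f x \<noteq> 0} ` {g. ms_divisor b g f} \<subset> {g. ms_divisor b g (interval_ms k)}"
    using embedding_image_subset by auto
  then have "card (divisor_embedding {x. f x \<noteq> 0} ` {g. ms_divisor b g f}) < ms_d b (interval_ms k)"
    unfolding ms_d_def by (rule psubset_card_mono[OF finite_divisors_interval])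
  then show ?thesis
    unfolding ms_d_def card_image[OF inj_on_embedding] .
qed

end

section \<open>Lunar divisors and digit multisets\<close>

lemma digit_0: "digit b x 0 = x mod b"
  by (simp add: digit_def)

lemma digit_Suc: "digit b x (Suc i) = digit b (x div b) i"
  by (simp add: digit_def div_mult2_eq)

lemma digit_of_0 [simp]: "digit b 0 i = 0"
  by (simp add: digit_def)

lemma digit_less: "0 < b \<Longrightarrow> digit b x i < b"
  by (simp add: digit_def)

lemma digit_nonzero_imp_le: "digit b x i \<noteq> 0 \<Longrightarrow> b ^ i \<le> x"
  by (rule ccontr) (simp add: digit_def)

lemma digit_nonzero_imp_less:
  assumes "2 \<le> b" "digit b x i \<noteq> 0"
  shows "i < x"
  using power_gt_expt[of b i] digit_nonzero_imp_le[OF assms(2)] assms(1) by linarith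

lemma sum_base_Suc:
  "(\<Sum>i<Suc N. c i * b ^ i) = c 0 + b * (\<Sum>i<N. c (Suc i) * (b::nat) ^ i)"
  by (simp only: sum.lessThan_Suc_shift) (simp add: sum_distrib_left ac_simps)

lemma digit_sum:
  assumes "\<forall>i. c i < b"
  shows "digit b (\<Sum>i<N. c i * b ^ i) j = (if j < N then c j else 0)"
  using assms
proof (induction j arbitrary: c N)
  case 0
  then show ?case
    by (cases N) (simp_all del: sum.lessThan_Suc add: sum_base_Suc digit_0)
next
  case (Suc j)
  note IH = Suc.IH and bound = Suc.prems
  show ?case
  proof (cases N)
    case (Suc M)
    have "c 0 < b"
      using bound by simp
    then have "(c 0 + b * (\<Sum>i<M. c (Suc i) * b ^ i)) div b = (\<Sum>i<M. c (Suc i) * b ^ i)"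
      by simp
    then show ?thesis
      using IH[of "\<lambda>i. c (Suc i)" M] bound
      by (simp del: sum.lessThan_Suc add: Suc sum_base_Suc digit_Suc)
  qed simp
qed

lemma sum_digits:
  assumes "0 < b" "x < b ^ N"
  shows "(\<Sum>i<N. digit b x i * b ^ i) = x"
  using assms(2)
proof (induction N arbitrary: x)
  case (Suc N)
  then have "x div b < b ^ N"
    using assms(1) by (simp add: div_less_iff_less_mult mult.commute)
  then show ?case
    using Suc.IH[of "x div b"] by (simp del: sum.lessThan_Suc add: sum_base_Suc digit_0 digit_Suc)
qed simp

lemma inj_digit:
  assumes "2 \<le> b"
  shows "inj (digit b)"
proof (rule injI)
  fix x y assume "digit b x = digit b y"
  have "b ^ x \<le> b ^ (x + y)" "b ^ y \<le> b ^ (x + y)"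
    using assms(1) by (simp_all add: power_increasing)
  moreover have "x < b ^ x" "y < b ^ y"
    using assms(1) power_gt_expt[of b] by simp_all
  ultimately have "x < b ^ (x + y)" "y < b ^ (x + y)"
    by linarith+
  then have "x = (\<Sum>i<x + y. digit b x i * b ^ i)" "y = (\<Sum>i<x + y. digit b y i * b ^ i)"
    using sum_digits[of b] assms(1) by simp_all
  then show "x = y"
    using \<open>digit b x = digit b y\<close> by simp
qed

lemma digit_eq_0_iff:
  assumes "2 \<le> b"
  shows "digit b n = (\<lambda>_. 0) \<longleftrightarrow> n = 0"
proof
  assume "digit b n = (\<lambda>_. 0)"
  then have "digit b n = digit b 0"
    by (simp add: fun_eq_iff)
  then show "n = 0"
    by (rule injD[OF inj_digit[OF assms]])
qed (simp add: fun_eq_iff)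

lemma digit_Mb:
  assumes "2 \<le> b"
  shows "digit b x \<in> Mb (b - 1)"
proof -
  have "digit b x i \<le> b - 1" for i
    using digit_less[of b x i] assms by linarith
  moreover have "{i. digit b x i \<noteq> 0} \<subseteq> {..<x}"
    using digit_nonzero_imp_less[OF assms] by blast
  then have "finite {i. digit b x i \<noteq> 0}"
    by (rule finite_subset) simp
  ultimately show ?thesis
    unfolding Mb_def by blast
qed

lemma range_digit:
  assumes "2 \<le> b"
  shows "range (digit b) = Mb (b - 1)"
proof (intro equalityI subsetI)
  fix g assume g: "g \<in> Mb (b - 1)"
  then obtain N where N: "\<forall>i. g i \<noteq> 0 \<longrightarrow> i < N"
    using finite_nat_set_iff_bounded[of "{i. g i \<noteq> 0}"] by (auto simp: Mb_def)
  have "\<forall>i. g i < b"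
  proof
    fix i
    have "g i \<le> b - 1"
      using g by (simp add: Mb_def)
    then show "g i < b"
      using assms by linarith
  qed
  then have "digit b (\<Sum>i<N. g i * b ^ i) = g"
    using N by (auto simp: digit_sum fun_eq_iff)
  then show "g \<in> range (digit b)"
    by (rule range_eqI[OF sym])
qed (use digit_Mb[OF assms] in blast)

lemma lunar_mult_as_sum:
  "lunar_mult b x y =
    (\<Sum>n<Suc (x + y). Max ((\<lambda>i. min (digit b x i) (digit b y (n - i))) ` {..n}) * b ^ n)"
  by (simp only: lunar_mult_def lessThan_Suc_atMost)

lemma digit_lunar_mult:
  assumes "2 \<le> b"
  shows "digit b (lunar_mult b x y) t =
    (if t \<le> x + y then Max ((\<lambda>i. min (digit b x i) (digit b y (t - i))) ` {..t}) else 0)"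
proof -
  have "Max ((\<lambda>i. min (digit b x i) (digit b y (n - i))) ` {..n}) < b" for n
  proof -
    have "Max ((\<lambda>i. min (digit b x i) (digit b y (n - i))) ` {..n})
        \<in> (\<lambda>i. min (digit b x i) (digit b y (n - i))) ` {..n}"
      by (rule Max_in) auto
    then show ?thesis
      using digit_less[of b x] assms by (auto simp: min_less_iff_disj)
  qed
  then have "\<forall>n. Max ((\<lambda>i. min (digit b x i) (digit b y (n - i))) ` {..n}) < b"
    by blast
  from digit_sum[OF this, of "Suc (x + y)" t] show ?thesis
    unfolding lunar_mult_as_sum by (simp only: less_Suc_eq_le)
qed

lemma digit_lunar_mult_ge_iff:
  assumes "2 \<le> b" "1 \<le> c"
  shows "c \<le> digit b (lunar_mult b x y) t \<longleftrightarrow> (\<exists>i\<le>t. c \<le> digit b x i \<and> c \<le> digit b y (t - i))"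
proof (cases "t \<le> x + y")
  case True
  then show ?thesis
    by (auto simp: digit_lunar_mult[OF assms(1)] Max_ge_iff)
next
  case False
  have "\<not> (c \<le> digit b x i \<and> c \<le> digit b y (t - i))" if "i \<le> t" for i
  proof
    assume "c \<le> digit b x i \<and> c \<le> digit b y (t - i)"
    then have "digit b x i \<noteq> 0" "digit b y (t - i) \<noteq> 0"
      using assms(2) by auto
    then have "i < x" "t - i < y"
      using digit_nonzero_imp_less[OF assms(1)] by blast+
    then show False
      using False that by linarith
  qed
  then show ?thesis
    using False assms(2) by (simp add: digit_lunar_mult[OF assms(1)])
qed

lemma set_array_lunar_mult:
  assumes "2 \<le> b" "1 \<le> c"
  shows "set_array (digit b (lunar_mult b x y)) c =
    sumset (set_array (digit b x) c) (set_array (digit b y) c)"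
proof (intro equalityI subsetI)
  fix t assume "t \<in> set_array (digit b (lunar_mult b x y)) c"
  then obtain i where "i \<le> t" "c \<le> digit b x i" "c \<le> digit b y (t - i)"
    using digit_lunar_mult_ge_iff[OF assms] unfolding set_array_def by auto
  then show "t \<in> sumset (set_array (digit b x) c) (set_array (digit b y) c)"
    unfolding sumset_def set_array_def by (intro CollectI exI[of _ i] exI[of _ "t - i"]) auto
next
  fix t assume "t \<in> sumset (set_array (digit b x) c) (set_array (digit b y) c)"
  then obtain i j where "t = i + j" "c \<le> digit b x i" "c \<le> digit b y j"
    unfolding sumset_def set_array_def by auto
  then have "\<exists>i'\<le>t. c \<le> digit b x i' \<and> c \<le> digit b y (t - i')"
    by (intro exI[of _ i]) auto
  then show "t \<in> set_array (digit b (lunar_mult b x y)) c"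
    using digit_lunar_mult_ge_iff[OF assms] unfolding set_array_def by auto
qed

lemma lunar_mult_0_left: "lunar_mult b 0 y = 0"
  by (simp add: lunar_mult_def)

lemma ms_divisor_digit_iff:
  assumes b: "2 \<le> b"
  shows "ms_divisor (b - 1) (digit b m) (digit b n) \<longleftrightarrow> (\<exists>q. lunar_mult b m q = n)"
proof
  assume "ms_divisor (b - 1) (digit b m) (digit b n)"
  then obtain h where h: "h \<in> Mb (b - 1)"
    and levels: "\<forall>i\<in>{1..b - 1}. set_array (digit b n) i = sumset (set_array (digit b m) i) (set_array h i)"
    unfolding ms_divisor_def by blast
  obtain q where q: "h = digit b q"
    using h range_digit[OF b] by blast
  have "digit b (lunar_mult b m q) = digit b n"
  proof (rule set_array_inj)
    show "\<forall>x. digit b (lunar_mult b m q) x \<le> b - 1" "\<forall>x. digit b n x \<le> b - 1"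
      using digit_Mb[OF b] by (simp_all add: Mb_def)
    show "\<forall>i\<in>{1..b - 1}. set_array (digit b (lunar_mult b m q)) i = set_array (digit b n) i"
      using levels set_array_lunar_mult[OF b] q by simp
  qed
  then show "\<exists>q. lunar_mult b m q = n"
    using inj_digit[OF b] by (auto dest: injD)
next
  assume "\<exists>q. lunar_mult b m q = n"
  then obtain q where "lunar_mult b m q = n" ..
  then show "ms_divisor (b - 1) (digit b m) (digit b n)"
    unfolding ms_divisor_def using digit_Mb[OF b] set_array_lunar_mult[OF b] by auto
qed

lemma lunar_d_eq_ms_d:
  assumes b: "2 \<le> b" and n: "0 < n"
  shows "lunar_d b n = ms_d (b - 1) (digit b n)"
proof -
  have "0 < m \<and> (\<exists>q. lunar_mult b m q = n) \<longleftrightarrow> ms_divisor (b - 1) (digit b m) (digit b n)" for m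
    using n lunar_mult_0_left[of b] unfolding ms_divisor_digit_iff[OF b] by (cases "m = 0") auto
  then have "{m. 0 < m \<and> (\<exists>q. lunar_mult b m q = n)} = {m. ms_divisor (b - 1) (digit b m) (digit b n)}"
    by blast
  moreover have "{g. ms_divisor (b - 1) g (digit b n)} = digit b ` {m. ms_divisor (b - 1) (digit b m) (digit b n)}"
  proof (intro equalityI subsetI)
    fix g assume g: "g \<in> {g. ms_divisor (b - 1) g (digit b n)}"
    then have "g \<in> range (digit b)"
      using range_digit[OF b] by (simp add: ms_divisor_def)
    then obtain m where "g = digit b m"
      by blast
    then show "g \<in> digit b ` {m. ms_divisor (b - 1) (digit b m) (digit b n)}"
      using g by blast
  qed auto
  ultimately show ?thesis
    unfolding lunar_d_def ms_d_def using card_image[OF inj_on_subset[OF inj_digit[OF b] subset_UNIV]] by simp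
qed

lemma repunit_eq_sum:
  fixes b k :: nat
  assumes "1 < b"
  shows "(b ^ k - 1) div (b - 1) = (\<Sum>i<k. b ^ i)"
proof -
  have "(b - 1) * (\<Sum>i<k. b ^ i) = b ^ k - 1"
  proof (induction k)
    case (Suc k)
    have "1 \<le> b ^ k" "b ^ k \<le> b * b ^ k"
      using assms one_le_power[of b k] by simp_all
    then show ?case
      using Suc by (simp add: algebra_simps)
  qed simp
  moreover have "b - 1 \<noteq> 0"
    using assms by simp
  ultimately show ?thesis
    by (metis nonzero_mult_div_cancel_left)
qed

lemma digit_repunit:
  assumes "2 \<le> b" "1 \<le> k"
  shows "digit b ((b ^ k - 1) div (b - 1)) = interval_ms (k - 1)"
proof -
  have "(b ^ k - 1) div (b - 1) = (\<Sum>i<k. 1 * b ^ i)"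
    using repunit_eq_sum[of b k] assms by simp
  then show ?thesis
    using digit_sum[of "\<lambda>_. 1" b k] assms by (auto simp: interval_ms_def fun_eq_iff)
qed

lemma lunar_d_repunit:
  assumes "2 \<le> b" "1 \<le> k"
  shows "lunar_d b ((b ^ k - 1) div (b - 1)) = ms_d (b - 1) (interval_ms (k - 1))"
proof -
  have "(b ^ k - 1) div (b - 1) \<noteq> 0"
    using digit_repunit[OF assms] digit_eq_0_iff[OF assms(1)] interval_ms_nonzero by metis
  then show ?thesis
    using lunar_d_eq_ms_d[OF assms(1)] digit_repunit[OF assms] by simp
qed

context
  fixes b k n :: nat
  assumes b: "3 \<le> b" and k: "1 \<le> k" and n: "b ^ (k - 1) \<le> n" "n < b ^ k"
begin

private lemma base_ge_2: "2 \<le> b" "2 \<le> b - 1"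
  using b by simp_all

private lemma n_positive: "0 < n"
proof -
  have "0 < b ^ (k - 1)"
    using b by simp
  then show ?thesis
    using n(1) by linarith
qed

private lemma lunar_d_eq_ms_d_digits: "lunar_d b n = ms_d (b - 1) (digit b n)"
  by (rule lunar_d_eq_ms_d[OF base_ge_2(1) n_positive])

private lemma digit_support_le: "\<forall>j. digit b n j \<noteq> 0 \<longrightarrow> j \<le> k - 1"
proof (intro allI impI)
  fix j assume "digit b n j \<noteq> 0"
  then have "b ^ j < b ^ k"
    using digit_nonzero_imp_le n(2) by (meson le_less_trans)
  then show "j \<le> k - 1"
    using b power_less_imp_less_exp[of b j k] by simp
qed

private lemma digit_nonzero: "digit b n \<noteq> (\<lambda>_. 0)"
  using digit_eq_0_iff[OF base_ge_2(1)] n_positive by simp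

theorem lunar_d_le_repunit: "lunar_d b n \<le> lunar_d b ((b ^ k - 1) div (b - 1))"
proof -
  have "ms_d (b - 1) (digit b n) \<le> ms_d (b - 1) (interval_ms (k - 1))"
    by (rule ms_d_le_interval[OF base_ge_2(2) digit_Mb[OF base_ge_2(1)] digit_support_le digit_nonzero])
  then show ?thesis
    unfolding lunar_d_eq_ms_d_digits lunar_d_repunit[OF base_ge_2(1) k] .
qed

theorem lunar_d_less_repunit:
  assumes "n \<noteq> (b ^ k - 1) div (b - 1)"
  shows "lunar_d b n < lunar_d b ((b ^ k - 1) div (b - 1))"
proof -
  have "digit b n \<noteq> digit b ((b ^ k - 1) div (b - 1))"
    using assms inj_digit[OF base_ge_2(1)] by (auto dest: injD)
  then have "digit b n \<noteq> interval_ms (k - 1)"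
    unfolding digit_repunit[OF base_ge_2(1) k] .
  then have "ms_d (b - 1) (digit b n) < ms_d (b - 1) (interval_ms (k - 1))"
    by (rule ms_d_less_interval[OF base_ge_2(2) digit_Mb[OF base_ge_2(1)] digit_support_le digit_nonzero])
  then show ?thesis
    unfolding lunar_d_eq_ms_d_digits lunar_d_repunit[OF base_ge_2(1) k] .
qed

end

theorem mainTheorem3:
  shows "(\<forall>b k f. b \<ge> 2 \<and> f \<in> Mb b \<and> (\<forall>j. f j \<noteq> 0 \<longrightarrow> j \<le> k) \<and> f \<noteq> (\<lambda>_. 0) \<longrightarrow>
            ms_d b f \<le> ms_d b (interval_ms k) \<and>
            (f \<noteq> interval_ms k \<longrightarrow> ms_d b f < ms_d b (interval_ms k)))
       \<and> (\<forall>b k n. b \<ge> 3 \<and> k \<ge> 1 \<and> b ^ (k - 1) \<le> n \<and> n < b ^ k \<longrightarrow>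
            lunar_d b n \<le> lunar_d b ((b ^ k - 1) div (b - 1)) \<and>
            (n \<noteq> (b ^ k - 1) div (b - 1) \<longrightarrow> lunar_d b n < lunar_d b ((b ^ k - 1) div (b - 1))))"
proof (intro conjI allI impI; elim conjE)
  fix b k :: nat and f :: "nat \<Rightarrow> nat"
  assume "2 \<le> b" "f \<in> Mb b" "\<forall>j. f j \<noteq> 0 \<longrightarrow> j \<le> k" "f \<noteq> (\<lambda>_. 0)"
  then show "ms_d b f \<le> ms_d b (interval_ms k)"
    and "f \<noteq> interval_ms k \<Longrightarrow> ms_d b f < ms_d b (interval_ms k)"
    by (rule ms_d_le_interval, rule ms_d_less_interval)
next
  fix b k n :: nat
  assume "3 \<le> b" "1 \<le> k" "b ^ (k - 1) \<le> n" "n < b ^ k"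
  then show "lunar_d b n \<le> lunar_d b ((b ^ k - 1) div (b - 1))"
    and "n \<noteq> (b ^ k - 1) div (b - 1) \<Longrightarrow> lunar_d b n < lunar_d b ((b ^ k - 1) div (b - 1))"
    by (rule lunar_d_le_repunit, rule lunar_d_less_repunit)
qed

end
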